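(* Under the setting described in the context, each of the operators $F$, $F_h^+$ and $\hat F_h^+$ admits a distance-like additive eigenvector: there exist $\lambda\in\mathbb{R}$ and a distance-like $v\in\operatorname{Lip}_1(X)$ with $Fv=\lambda+v$; similarly for $F_h^+$ on $\operatorname{Lip}_1(X)$ and for $\hat F_h^+$ on $\operatorname{Lip}_1(X_h)$.
   Context: Let $C\subset\mathbb{R}^n$ be a pointed closed convex cone, $C^*$ its dual cone, $e^*\in\operatorname{int}C^*$, and $\Delta=\{x\in C:\langle x,e^*\rangle=1\}$. $x\le_C y$ means $y-x\in C$; the Funk hemi-metric on $\operatorname{Int}C$ is $\operatorname{Funk}(x,y)=\log\inf\{\lambda>0:x\le_C\lambda y\}$ and Hilbert's metric is $\operatorname{Hil}(x,y)=\operatorname{Funk}(x,y)+\operatorname{Funk}(y,x)$. Let $\mathcal{A},\mathcal{B}$ be nonempty compact action sets and $(T_{ab})_{(a,b)\in\mathcal{A}\times\mathcal{B}}$ self-maps of $\operatorname{Int}C$ that are nonexpansive for $\operatorname{Funk}$, such that for each $x$ the maps $a\mapsto T_{ab}(x)$, $b\mapsto T_{ab}(x)$ are continuous and for each compact $K$ the set $\{T_{ab}(x):(a,b,x)\in\mathcal{A}\times\mathcal{B}\times K\}$ is compact, and each $T_{ab}$ extends continuously to $C$. Small cone assumption: there is a closed cone $K\subset C$ with $T_{ab}(K)\subset K$ for all $a,b$ and $X:=K\cap\Delta\subset\operatorname{relint}\Delta$. For $h>0$, $X_h\subset X$ is a finite set with $X\subset\bigcup_{y\in X_h}\{x:\operatorname{Hil}(x,y)<h\}$.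 For $Y\subset\operatorname{Int}C$, $\operatorname{Lip}_1(Y)$ is the set of $f:Y\to\mathbb{R}$ with $f(x)-f(y)\le\operatorname{Funk}(x,y)$ on $Y$. Define $F:\operatorname{Lip}_1(X)\to\operatorname{Lip}_1(X)$ by $Fv(x)=\inf_{a\in\mathcal{A}}\sup_{b\in\mathcal{B}}\big[\log\langle T_{ab}(x),e^*\rangle+v\big(T_{ab}(x)/\langle T_{ab}(x),e^*\rangle\big)\big]$; $I_h^+:\mathbb{R}^{X_h}\to\mathbb{R}^X$, $I_h^+v(x)=\min_{y\in X_h}[v(y)+\operatorname{Funk}(x,y)]$; $R_h:\mathbb{R}^X\to\mathbb{R}^{X_h}$ the restriction; $F_h^+=FI_h^+R_h$ on $\operatorname{Lip}_1(X)$ and $\hat F_h^+=R_hFI_h^+$ on $\operatorname{Lip}_1(X_h)$. A function $v\in\operatorname{Lip}_1(Y)$ is distance-like if $v(x)\ge\alpha+\operatorname{Funk}(x,x_1)$ for all $x\in Y$, for some $x_1\in Y$, $\alpha\in\mathbb{R}$. *)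

theory Defs
  imports "HOL-Analysis.Analysis"
begin

definition dual_cone :: "'a::euclidean_space set \<Rightarrow> 'a set" where
  "dual_cone C = {y. \<forall>x\<in>C. 0 \<le> x \<bullet> y}"

definition cone_le :: "'a::euclidean_space set \<Rightarrow> 'a \<Rightarrow> 'a \<Rightarrow> bool" where
  "cone_le C x y \<longleftrightarrow> y - x \<in> C"

definition pointed_cone :: "'a::euclidean_space set \<Rightarrow> bool" where
  "pointed_cone C \<longleftrightarrow> (\<forall>x. x \<in> C \<and> - x \<in> C \<longrightarrow> x = 0)"

definition Funk :: "'a::euclidean_space set \<Rightarrow> 'a \<Rightarrow> 'a \<Rightarrow> real" where
  "Funk C x y = ln (Inf {l. 0 < l \<and> cone_le C x (l *\<^sub>R y)})"

definition Hil :: "'a::euclidean_space set \<Rightarrow> 'a \<Rightarrow> 'a \<Rightarrow> real" where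
  "Hil C x y = Funk C x y + Funk C y x"

definition Delta_set :: "'a::euclidean_space set \<Rightarrow> 'a \<Rightarrow> 'a set" where
  "Delta_set C e = {x \<in> C. x \<bullet> e = 1}"

definition Lip1 :: "'a::euclidean_space set \<Rightarrow> 'a set \<Rightarrow> ('a \<Rightarrow> real) set" where
  "Lip1 C Y = {f. \<forall>x\<in>Y. \<forall>y\<in>Y. f x - f y \<le> Funk C x y}"

definition distance_like :: "'a::euclidean_space set \<Rightarrow> 'a set \<Rightarrow> ('a \<Rightarrow> real) \<Rightarrow> bool" where
  "distance_like C Y v \<longleftrightarrow> (\<exists>x1\<in>Y. \<exists>\<alpha>::real. \<forall>x\<in>Y. \<alpha> + Funk C x x1 \<le> v x)"

definition Fop :: "'a::euclidean_space \<Rightarrow> 'b set \<Rightarrow> 'c set \<Rightarrow> ('b \<Rightarrow> 'c \<Rightarrow> 'a \<Rightarrow> 'a)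
    \<Rightarrow> ('a \<Rightarrow> real) \<Rightarrow> 'a \<Rightarrow> real" where
  "Fop e A B T v x = (INF a\<in>A. SUP b\<in>B.
      ln (T a b x \<bullet> e) + v ((1 / (T a b x \<bullet> e)) *\<^sub>R T a b x))"

text \<open>Interpolation I_h^+ : only the values of v on X_h are used (so I_h^+ o R_h = Ih).\<close>
definition Ih :: "'a::euclidean_space set \<Rightarrow> 'a set \<Rightarrow> ('a \<Rightarrow> real) \<Rightarrow> 'a \<Rightarrow> real" where
  "Ih C Xh v x = Min ((\<lambda>y. v y + Funk C x y) ` Xh)"

end

theory Submission
  imports Defs "HOL-Complex_Analysis.Great_Picard"
begin

(* Vanishing discount. Let G be a monotone operator that commutes with additive constants and
   maps functions which are 1-Lipschitz for a hemi-metric D on a compact set X into such functions.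
   For 0 <= alpha < 1, v |-> G (alpha v) is a sup-norm contraction, so it has a fixed point V.
   The normalised functions w = alpha (V - V x0) are again D-Lipschitz, hence equibounded and
   equicontinuous when D is bounded and small near the diagonal, and they satisfy
   G w = w + (1 - alpha) V x0 up to an error of order 1 - alpha. By Arzela-Ascoli a subsequence
   converges uniformly as alpha -> 1, and the limit is an additive eigenvector of G.
   For the Funk hemi-metric on X = K inter Delta this applies to F and to F o I_h^+: they preserve
   Lip_1(X) because the T_ab are Funk-nonexpansive and Funk (s x) (t y) <= Funk x y + log s - log t,
   and I_h^+ v is Lipschitz by the triangle inequality. Since Funk is bounded on X, every
   Lipschitz function is distance-like, and the eigenvector of F o I_h^+ restricted to X_h is an
   eigenvector of R_h F I_h^+. *)

section \<open>Operators on Lipschitz functions for a hemi-metric\<close>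

lemma geometric_increments_tendsto:
  fixes u :: "nat \<Rightarrow> real"
  assumes \<alpha>: "0 \<le> \<alpha>" "\<alpha> < 1" and step: "\<And>n. \<bar>u (Suc n) - u n\<bar> \<le> c * \<alpha> ^ n"
  obtains l where "u \<longlonglongrightarrow> l" and "\<And>n. \<bar>l - u n\<bar> \<le> c * \<alpha> ^ n / (1 - \<alpha>)"
proof -
  define d where "d k = u (Suc k) - u k" for k
  have u_sum: "u n = u 0 + (\<Sum>k<n. d k)" for n
    by (simp add: d_def sum_lessThan_telescope)
  have geo: "summable (\<lambda>k. c * \<alpha> ^ k)"
    using \<alpha> by (intro summable_mult summable_geometric) simp
  have d: "summable d"
    using step by (intro summable_comparison_test'[OF geo]) (simp add: d_def)
  have "(\<lambda>n. u 0 + (\<Sum>k<n. d k)) \<longlonglongrightarrow> u 0 + suminf d"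
    by (intro tendsto_add tendsto_const summable_LIMSEQ d)
  then have "u \<longlonglongrightarrow> u 0 + suminf d"
    by (simp only: u_sum[symmetric])
  moreover have "\<bar>(u 0 + suminf d) - u n\<bar> \<le> c * \<alpha> ^ n / (1 - \<alpha>)" for n
  proof -
    have "\<bar>(u 0 + suminf d) - u n\<bar> = norm (\<Sum>k. d (k + n))"
      using suminf_minus_initial_segment[OF d, of n] u_sum[of n] by simp
    also have "\<dots> \<le> (\<Sum>k. c * \<alpha> ^ n * \<alpha> ^ k)"
    proof (rule norm_suminf_le)
      show "norm (d (k + n)) \<le> c * \<alpha> ^ n * \<alpha> ^ k" for k
        using step[of "k + n"] by (simp add: d_def power_add mult_ac)
      show "summable (\<lambda>k. c * \<alpha> ^ n * \<alpha> ^ k)"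
        using \<alpha> by (intro summable_mult summable_geometric) simp
    qed
    also have "\<dots> = c * \<alpha> ^ n / (1 - \<alpha>)"
      using \<alpha> by (simp add: suminf_mult suminf_geometric)
    finally show ?thesis .
  qed
  ultimately show ?thesis using that by blast
qed

definition Lip_wrt :: "('a \<Rightarrow> 'a \<Rightarrow> real) \<Rightarrow> 'a set \<Rightarrow> ('a \<Rightarrow> real) set" where
  "Lip_wrt D X = {v. \<forall>x\<in>X. \<forall>y\<in>X. v x - v y \<le> D x y}"

lemma Lip1_eq_Lip_wrt_Funk: "Lip1 C Y = Lip_wrt (Funk C) Y"
  by (simp add: Lip1_def Lip_wrt_def)

lemma Lip_wrt_subset: "v \<in> Lip_wrt D X \<Longrightarrow> Y \<subseteq> X \<Longrightarrow> v \<in> Lip_wrt D Y"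
  by (auto simp: Lip_wrt_def)

lemma Lip_wrt_const:
  "(\<And>x y. x \<in> X \<Longrightarrow> y \<in> X \<Longrightarrow> 0 \<le> D x y) \<Longrightarrow> (\<lambda>_. c) \<in> Lip_wrt D X"
  by (simp add: Lip_wrt_def)

lemma Lip_wrt_add_const: "v \<in> Lip_wrt D X \<Longrightarrow> (\<lambda>y. v y + c) \<in> Lip_wrt D X"
  by (simp add: Lip_wrt_def)

lemma Lip_wrt_scale:
  assumes "v \<in> Lip_wrt D X" "0 \<le> \<alpha>" "\<alpha> \<le> 1"
    and D_nonneg: "\<And>x y. x \<in> X \<Longrightarrow> y \<in> X \<Longrightarrow> 0 \<le> D x y"
  shows "(\<lambda>y. \<alpha> * v y) \<in> Lip_wrt D X"
  unfolding Lip_wrt_def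
proof (intro CollectI ballI)
  fix x y assume xy: "x \<in> X" "y \<in> X"
  have "\<alpha> * (v x - v y) \<le> max 0 (v x - v y)"
  proof (cases "v x - v y \<ge> 0")
    case True
    then show ?thesis using assms(2,3) mult_left_le_one_le[of "v x - v y" \<alpha>] by simp
  next
    case False
    then show ?thesis using assms(2) mult_nonneg_nonpos[of \<alpha> "v x - v y"] by simp
  qed
  also have "\<dots> \<le> D x y" using assms(1) D_nonneg xy by (auto simp: Lip_wrt_def)
  finally show "\<alpha> * v x - \<alpha> * v y \<le> D x y" by (simp add: right_diff_distrib)
qed

lemma Lip_wrt_limit:
  assumes "\<And>n. u n \<in> Lip_wrt D X" and "\<And>x. x \<in> X \<Longrightarrow> (\<lambda>n. u n x) \<longlonglongrightarrow> v x"
  shows "v \<in> Lip_wrt D X"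
  unfolding Lip_wrt_def
proof (intro CollectI ballI)
  fix x y assume "x \<in> X" "y \<in> X"
  then have "(\<lambda>n. u n x - u n y) \<longlonglongrightarrow> v x - v y" "\<forall>n. u n x - u n y \<le> D x y"
    using assms by (auto intro: tendsto_diff simp: Lip_wrt_def)
  then show "v x - v y \<le> D x y" by (intro LIMSEQ_le_const2) auto
qed

locale topical_Lip_operator =
  fixes X :: "'a::euclidean_space set" and D :: "'a \<Rightarrow> 'a \<Rightarrow> real"
    and G :: "('a \<Rightarrow> real) \<Rightarrow> 'a \<Rightarrow> real"
  assumes X_compact: "compact X" and X_nonempty: "X \<noteq> {}"
    and D_nonneg: "\<And>x y. x \<in> X \<Longrightarrow> y \<in> X \<Longrightarrow> 0 \<le> D x y"
    and D_bounded: "\<exists>M. \<forall>x\<in>X. \<forall>y\<in>X. D x y \<le> M"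
    and D_small_near_diagonal: "\<And>x r. x \<in> X \<Longrightarrow> 0 < r \<Longrightarrow>
        \<exists>\<delta>>0. \<forall>y\<in>X. norm (x - y) < \<delta> \<longrightarrow> D x y < r \<and> D y x < r"
    and G_shift_mono: "\<And>v w d x. v \<in> Lip_wrt D X \<Longrightarrow> w \<in> Lip_wrt D X \<Longrightarrow>
        (\<forall>y\<in>X. v y \<le> w y + d) \<Longrightarrow> x \<in> X \<Longrightarrow> G v x \<le> G w x + d"
    and G_Lip: "\<And>v. v \<in> Lip_wrt D X \<Longrightarrow> G v \<in> Lip_wrt D X"
begin

lemma Lip_oscillation_bound:
  obtains M where "\<And>v x y. v \<in> Lip_wrt D X \<Longrightarrow> x \<in> X \<Longrightarrow> y \<in> X \<Longrightarrow> \<bar>v x - v y\<bar> \<le> M"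
proof -
  obtain M where M: "\<forall>x\<in>X. \<forall>y\<in>X. D x y \<le> M" using D_bounded by blast
  have "\<bar>v x - v y\<bar> \<le> M" if "v \<in> Lip_wrt D X" "x \<in> X" "y \<in> X" for v x y
  proof -
    have "v x - v y \<le> D x y" "v y - v x \<le> D y x" using that by (auto simp: Lip_wrt_def)
    moreover have "D x y \<le> M" "D y x \<le> M" using M that(2,3) by auto
    ultimately show ?thesis by linarith
  qed
  then show ?thesis using that by blast
qed

lemma G_nonexpansive:
  assumes "v \<in> Lip_wrt D X" "w \<in> Lip_wrt D X" "\<And>y. y \<in> X \<Longrightarrow> \<bar>v y - w y\<bar> \<le> d" "x \<in> X"
  shows "\<bar>G v x - G w x\<bar> \<le> d"
proof -
  have "\<forall>y\<in>X. v y \<le> w y + d" "\<forall>y\<in>X. w y \<le> v y + d"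
    using assms(3) by (force simp: abs_le_iff)+
  then have "G v x \<le> G w x + d" "G w x \<le> G v x + d"
    using G_shift_mono assms(1,2,4) by blast+
  then show ?thesis by linarith
qed

lemma G_add_const:
  assumes v: "v \<in> Lip_wrt D X" and x: "x \<in> X"
  shows "G (\<lambda>y. v y + c) x = G v x + c"
proof -
  have v': "(\<lambda>y. v y + c) \<in> Lip_wrt D X" using v by (rule Lip_wrt_add_const)
  have "G (\<lambda>y. v y + c) x \<le> G v x + c" using G_shift_mono[OF v' v, of c x] x by simp
  moreover have "G v x \<le> G (\<lambda>y. v y + c) x + - c" using G_shift_mono[OF v v', of "- c" x] x by simp
  ultimately show ?thesis by linarith
qed

lemma G_scaled_contraction:
  assumes "f \<in> Lip_wrt D X" "g \<in> Lip_wrt D X" "\<And>y. y \<in> X \<Longrightarrow> \<bar>f y - g y\<bar> \<le> d" "x \<in> X"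
    and \<alpha>: "0 \<le> \<alpha>" "\<alpha> \<le> 1"
  shows "\<bar>G (\<lambda>y. \<alpha> * f y) x - G (\<lambda>y. \<alpha> * g y) x\<bar> \<le> \<alpha> * d"
proof (rule G_nonexpansive)
  show "(\<lambda>y. \<alpha> * f y) \<in> Lip_wrt D X" "(\<lambda>y. \<alpha> * g y) \<in> Lip_wrt D X"
    using assms(1,2) \<alpha> D_nonneg by (auto intro: Lip_wrt_scale)
  show "\<bar>\<alpha> * f y - \<alpha> * g y\<bar> \<le> \<alpha> * d" if "y \<in> X" for y
    using assms(3)[OF that] \<alpha> by (simp add: abs_mult mult_left_mono flip: right_diff_distrib)
qed (rule assms(4))

lemma discounted_iterates:
  assumes G0: "\<And>x. x \<in> X \<Longrightarrow> \<bar>G (\<lambda>_. 0) x\<bar> \<le> M0" and \<alpha>: "0 \<le> \<alpha>" "\<alpha> \<le> 1"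
    and u_0: "u 0 = (\<lambda>_. 0)" and u_Suc: "\<And>n. u (Suc n) = G (\<lambda>y. \<alpha> * u n y)"
  shows "u n \<in> Lip_wrt D X" and "x \<in> X \<Longrightarrow> \<bar>u (Suc n) x - u n x\<bar> \<le> M0 * \<alpha> ^ n"
proof -
  show u_Lip: "u n \<in> Lip_wrt D X" for n
  proof (induction n)
    case 0 show ?case using D_nonneg by (simp add: u_0 Lip_wrt_const)
  next
    case (Suc n) show ?case using Suc \<alpha> D_nonneg by (simp add: u_Suc G_Lip Lip_wrt_scale)
  qed
  show "x \<in> X \<Longrightarrow> \<bar>u (Suc n) x - u n x\<bar> \<le> M0 * \<alpha> ^ n"
  proof (induction n arbitrary: x)
    case 0 then show ?case using G0 by (simp add: u_0 u_Suc)
  next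
    case (Suc n)
    have "\<bar>u (Suc (Suc n)) x - u (Suc n) x\<bar> \<le> \<alpha> * (M0 * \<alpha> ^ n)"
      using G_scaled_contraction[OF u_Lip u_Lip Suc.IH Suc.prems \<alpha>] by (simp only: u_Suc)
    then show ?case by (simp add: mult_ac)
  qed
qed

lemma discounted_fixed_point:
  assumes G0: "\<And>x. x \<in> X \<Longrightarrow> \<bar>G (\<lambda>_. 0) x\<bar> \<le> M0" and \<alpha>: "0 \<le> \<alpha>" "\<alpha> < 1"
  obtains v where "v \<in> Lip_wrt D X" "\<And>x. x \<in> X \<Longrightarrow> \<bar>v x\<bar> \<le> M0 / (1 - \<alpha>)"
    "\<And>x. x \<in> X \<Longrightarrow> G (\<lambda>y. \<alpha> * v y) x = v x"
proof -
  define u where "u n = ((\<lambda>v. G (\<lambda>y. \<alpha> * v y)) ^^ n) (\<lambda>_. 0)" for n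
  have u_Suc: "u (Suc n) = G (\<lambda>y. \<alpha> * u n y)" for n by (simp add: u_def)
  have u_0: "u 0 = (\<lambda>_. 0)" by (simp add: u_def)
  have \<alpha>_le: "\<alpha> \<le> 1" using \<alpha> by simp
  have u_Lip: "u n \<in> Lip_wrt D X" for n
    using G0 \<alpha>(1) \<alpha>_le u_0 u_Suc by (rule discounted_iterates(1))
  have u_step: "\<bar>u (Suc n) x - u n x\<bar> \<le> M0 * \<alpha> ^ n" if "x \<in> X" for n x
    using G0 \<alpha>(1) \<alpha>_le u_0 u_Suc that by (rule discounted_iterates(2))
  have "\<exists>l. (\<lambda>n. u n x) \<longlonglongrightarrow> l \<and> (\<forall>n. \<bar>l - u n x\<bar> \<le> M0 * \<alpha> ^ n / (1 - \<alpha>))"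
    if "x \<in> X" for x
    using geometric_increments_tendsto[OF \<alpha> u_step[OF that]] by metis
  then obtain v where v_lim: "\<And>x. x \<in> X \<Longrightarrow> (\<lambda>n. u n x) \<longlonglongrightarrow> v x"
    and v_close: "\<And>x n. x \<in> X \<Longrightarrow> \<bar>v x - u n x\<bar> \<le> M0 * \<alpha> ^ n / (1 - \<alpha>)"
    by metis
  have v_Lip: "v \<in> Lip_wrt D X" using u_Lip v_lim by (rule Lip_wrt_limit)
  have "G (\<lambda>y. \<alpha> * v y) x = v x" if x: "x \<in> X" for x
  proof -
    have "\<bar>G (\<lambda>y. \<alpha> * v y) x - u (Suc n) x\<bar> \<le> \<alpha> * (M0 * \<alpha> ^ n / (1 - \<alpha>))" for n
      unfolding u_Suc by (rule G_scaled_contraction[OF v_Lip u_Lip v_close x \<alpha>(1) \<alpha>_le])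
    then have "\<forall>n. norm (u (Suc n) x - G (\<lambda>y. \<alpha> * v y) x) \<le> \<alpha> * (M0 * \<alpha> ^ n / (1 - \<alpha>))"
      by (simp add: abs_minus_commute)
    moreover have "(\<lambda>n. \<alpha> * (M0 * \<alpha> ^ n / (1 - \<alpha>))) \<longlonglongrightarrow> 0"
      using \<alpha> by (intro tendsto_eq_intros LIMSEQ_power_zero) auto
    ultimately have "(\<lambda>n. u (Suc n) x - G (\<lambda>y. \<alpha> * v y) x) \<longlonglongrightarrow> 0"
      by (rule Lim_null_comparison[OF always_eventually])
    then have "(\<lambda>n. u (Suc n) x) \<longlonglongrightarrow> G (\<lambda>y. \<alpha> * v y) x"
      by (simp add: LIM_zero_iff)
    moreover have "(\<lambda>n. u (Suc n) x) \<longlonglongrightarrow> v x"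
      using v_lim[OF x] by (rule LIMSEQ_Suc)
    ultimately show ?thesis by (rule LIMSEQ_unique)
  qed
  moreover have "\<bar>v x\<bar> \<le> M0 / (1 - \<alpha>)" if "x \<in> X" for x
    using v_close[OF that, of 0] by (simp add: u_def)
  ultimately show ?thesis using that v_Lip by blast
qed

lemma approximate_eigenvector:
  assumes G0: "\<And>x. x \<in> X \<Longrightarrow> \<bar>G (\<lambda>_. 0) x\<bar> \<le> M0" and x0: "x0 \<in> X" and \<epsilon>: "0 < \<epsilon>"
  obtains w c where "w \<in> Lip_wrt D X" "w x0 = 0" "\<bar>c\<bar> \<le> M0"
    "\<And>x. x \<in> X \<Longrightarrow> \<bar>G w x - (w x + c)\<bar> \<le> \<epsilon>"
proof -
  obtain M where M: "\<And>v x y. v \<in> Lip_wrt D X \<Longrightarrow> x \<in> X \<Longrightarrow> y \<in> X \<Longrightarrow> \<bar>v x - v y\<bar> \<le> M"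
    using Lip_oscillation_bound by blast
  have "0 \<le> M" using M[OF Lip_wrt_const x0 x0] D_nonneg by auto
  \<comment> \<open>Chosen so that \<open>(1 - \<alpha>) * M \<le> \<epsilon>\<close>, which bounds the defect of the normalised discounted solution.\<close>
  define \<alpha> where "\<alpha> = M / (M + \<epsilon>)"
  have \<alpha>: "0 \<le> \<alpha>" "\<alpha> < 1" and one_minus_\<alpha>: "1 - \<alpha> = \<epsilon> / (M + \<epsilon>)"
    using \<open>0 \<le> M\<close> \<epsilon> by (auto simp: \<alpha>_def field_simps)
  obtain V where V_Lip: "V \<in> Lip_wrt D X" and V_bounded: "\<And>x. x \<in> X \<Longrightarrow> \<bar>V x\<bar> \<le> M0 / (1 - \<alpha>)"
    and V_fixed: "\<And>x. x \<in> X \<Longrightarrow> G (\<lambda>y. \<alpha> * V y) x = V x"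
    using discounted_fixed_point[OF G0 \<alpha>] by blast
  define w where "w y = \<alpha> * V y + - (\<alpha> * V x0)" for y
  define c where "c = (1 - \<alpha>) * V x0"
  have V_scaled_Lip: "(\<lambda>y. \<alpha> * V y) \<in> Lip_wrt D X"
    using V_Lip \<alpha> D_nonneg by (intro Lip_wrt_scale) auto
  then have w_Lip: "w \<in> Lip_wrt D X"
    unfolding w_def[abs_def] by (rule Lip_wrt_add_const)
  have "(1 - \<alpha>) * \<bar>V x0\<bar> \<le> (1 - \<alpha>) * (M0 / (1 - \<alpha>))"
    using V_bounded[OF x0] \<alpha> by (intro mult_left_mono) auto
  then have "\<bar>c\<bar> \<le> M0"
    using \<alpha> by (simp add: c_def abs_mult)
  moreover have "\<bar>G w x - (w x + c)\<bar> \<le> \<epsilon>" if x: "x \<in> X" for x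
  proof -
    have "G w x = G (\<lambda>y. \<alpha> * V y) x + - (\<alpha> * V x0)"
      unfolding w_def using V_scaled_Lip x by (rule G_add_const)
    then have "G w x - (w x + c) = (1 - \<alpha>) * (V x - V x0)"
      using V_fixed[OF x] by (simp add: w_def c_def algebra_simps)
    then have "\<bar>G w x - (w x + c)\<bar> = (1 - \<alpha>) * \<bar>V x - V x0\<bar>"
      using \<alpha> by (simp add: abs_mult)
    also have "\<dots> \<le> \<epsilon> / (M + \<epsilon>) * M"
      unfolding one_minus_\<alpha> using M[OF V_Lip x x0] \<epsilon> \<open>0 \<le> M\<close> by (intro mult_left_mono) auto
    also have "\<dots> \<le> \<epsilon>"
      using \<open>0 \<le> M\<close> \<epsilon> by (simp add: field_simps)
    finally show ?thesis .
  qed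
  moreover have "w x0 = 0" by (simp add: w_def)
  ultimately show ?thesis using that w_Lip by blast
qed

lemma Lip_equicontinuous:
  assumes x: "x \<in> X" and r: "0 < r"
  shows "\<exists>\<delta>>0. \<forall>v\<in>Lip_wrt D X. \<forall>y\<in>X. norm (x - y) < \<delta> \<longrightarrow> \<bar>v x - v y\<bar> < r"
proof -
  obtain \<delta> where "0 < \<delta>" and \<delta>: "\<forall>y\<in>X. norm (x - y) < \<delta> \<longrightarrow> D x y < r \<and> D y x < r"
    using D_small_near_diagonal[OF x r] by blast
  have "\<bar>v x - v y\<bar> < r" if "v \<in> Lip_wrt D X" "y \<in> X" "norm (x - y) < \<delta>" for v y
    using that x \<delta> by (fastforce simp: Lip_wrt_def abs_less_iff)
  then show ?thesis using \<open>0 < \<delta>\<close> by blast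
qed

lemma Lip_subsequence_uniform_limit:
  fixes c :: "nat \<Rightarrow> real"
  assumes x0: "x0 \<in> X" and w_Lip: "\<And>n. w n \<in> Lip_wrt D X" and w_x0: "\<And>n. w n x0 = 0"
    and c_bounded: "\<And>n. \<bar>c n\<bar> \<le> Mc"
  obtains k W lam where "strict_mono (k :: nat \<Rightarrow> nat)" "W \<in> Lip_wrt D X"
    "uniform_limit X (\<lambda>n. w (k n)) W sequentially" "(\<lambda>n. c (k n)) \<longlonglongrightarrow> lam"
proof -
  obtain M where M: "\<And>v x y. v \<in> Lip_wrt D X \<Longrightarrow> x \<in> X \<Longrightarrow> y \<in> X \<Longrightarrow> \<bar>v x - v y\<bar> \<le> M"
    using Lip_oscillation_bound by blast
  \<comment> \<open>Arzela-Ascoli is applied to \<open>w n + c n\<close>, so that the constants converge along the same subsequence.\<close>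
  define z where "z n x = w n x + c n" for n x
  have z_bounded: "norm (z n x) \<le> M + Mc" if "x \<in> X" for n x
    using M[OF w_Lip that x0, of n] c_bounded[of n] abs_triangle_ineq[of "w n x" "c n"]
    by (simp add: z_def w_x0)
  have z_equicontinuous:
    "\<exists>\<delta>. 0 < \<delta> \<and> (\<forall>n y. y \<in> X \<and> norm (x - y) < \<delta> \<longrightarrow> norm (z n x - z n y) < r)"
    if "x \<in> X" "0 < r" for x r
    using Lip_equicontinuous[OF that] w_Lip by (simp add: z_def) blast
  obtain g k where k: "strict_mono (k :: nat \<Rightarrow> nat)"
    and g: "\<And>r. 0 < r \<Longrightarrow> \<exists>N. \<forall>n x. n \<ge> N \<and> x \<in> X \<longrightarrow> norm (z (k n) x - g x) < r"
    using Arzela_Ascoli[OF X_compact z_bounded z_equicontinuous] by metis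
  have z_lim: "uniform_limit X (\<lambda>n. z (k n)) g sequentially"
    unfolding uniform_limit_sequentially_iff dist_norm using g by blast
  have c_lim: "(\<lambda>n. c (k n)) \<longlonglongrightarrow> g x0"
    using tendsto_uniform_limitI[OF z_lim x0] by (simp add: z_def w_x0)
  have "uniform_limit X (\<lambda>n x. c (k n)) (\<lambda>x. g x0) sequentially"
  proof (rule uniform_limitI)
    fix r :: real assume "0 < r"
    with c_lim have "\<forall>\<^sub>F n in sequentially. dist (c (k n)) (g x0) < r" by (rule tendstoD)
    then show "\<forall>\<^sub>F n in sequentially. \<forall>x\<in>X. dist (c (k n)) (g x0) < r"
      by (rule eventually_mono) blast
  qed
  then have "uniform_limit X (\<lambda>n x. z (k n) x - c (k n)) (\<lambda>x. g x - g x0) sequentially"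
    by (intro uniform_limit_minus z_lim)
  then have w_lim: "uniform_limit X (\<lambda>n. w (k n)) (\<lambda>x. g x - g x0) sequentially"
    by (simp add: z_def)
  have "(\<lambda>x. g x - g x0) \<in> Lip_wrt D X"
    using w_Lip tendsto_uniform_limitI[OF w_lim] by (rule Lip_wrt_limit)
  with k w_lim c_lim show ?thesis using that by blast
qed

lemma G_tendsto_uniform_limit:
  assumes f_Lip: "\<And>n. f n \<in> Lip_wrt D X" and W_Lip: "W \<in> Lip_wrt D X"
    and lim: "uniform_limit X f W sequentially" and x: "x \<in> X"
  shows "(\<lambda>n. G (f n) x) \<longlonglongrightarrow> G W x"
proof (rule LIMSEQ_I)
  fix r :: real assume "0 < r"
  then have "0 < r / 2" by simp
  then obtain N where N: "\<forall>n\<ge>N. \<forall>y\<in>X. dist (f n y) (W y) < r / 2"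
    using lim unfolding uniform_limit_sequentially_iff by blast
  have "norm (G (f n) x - G W x) < r" if "n \<ge> N" for n
  proof -
    have "\<bar>G (f n) x - G W x\<bar> \<le> r / 2"
      using N that by (intro G_nonexpansive[OF f_Lip W_Lip _ x]) (force simp: dist_real_def)
    then show ?thesis using \<open>0 < r\<close> by simp
  qed
  then show "\<exists>N. \<forall>n\<ge>N. norm (G (f n) x - G W x) < r" by blast
qed

lemma eigenvector_of_approximate:
  fixes c \<epsilon> :: "nat \<Rightarrow> real"
  assumes x0: "x0 \<in> X"
    and w_Lip: "\<And>n. w n \<in> Lip_wrt D X" and w_x0: "\<And>n. w n x0 = 0"
    and c_bounded: "\<And>n. \<bar>c n\<bar> \<le> Mc" and \<epsilon>: "\<epsilon> \<longlonglongrightarrow> 0"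
    and approx: "\<And>n x. x \<in> X \<Longrightarrow> \<bar>G (w n) x - (w n x + c n)\<bar> \<le> \<epsilon> n"
  obtains lam v where "v \<in> Lip_wrt D X" "\<And>x. x \<in> X \<Longrightarrow> G v x = lam + v x"
proof -
  obtain k W lam where k: "strict_mono (k :: nat \<Rightarrow> nat)" and W_Lip: "W \<in> Lip_wrt D X"
    and w_lim: "uniform_limit X (\<lambda>n. w (k n)) W sequentially" and c_lim: "(\<lambda>n. c (k n)) \<longlonglongrightarrow> lam"
    by (rule Lip_subsequence_uniform_limit[OF x0 w_Lip w_x0 c_bounded])
  have "G W x = lam + W x" if x: "x \<in> X" for x
  proof -
    have "\<forall>n. norm (G (w (k n)) x - (w (k n) x + c (k n))) \<le> \<epsilon> (k n)"
      using approx[OF x] by simp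
    moreover have "(\<lambda>n. \<epsilon> (k n)) \<longlonglongrightarrow> 0"
      using LIMSEQ_subseq_LIMSEQ[OF \<epsilon> k] by (simp add: comp_def)
    ultimately have "(\<lambda>n. G (w (k n)) x - (w (k n) x + c (k n))) \<longlonglongrightarrow> 0"
      by (rule Lim_null_comparison[OF always_eventually])
    moreover have "(\<lambda>n. w (k n) x + c (k n)) \<longlonglongrightarrow> W x + lam"
      by (intro tendsto_add tendsto_uniform_limitI[OF w_lim x] c_lim)
    ultimately have "(\<lambda>n. G (w (k n)) x) \<longlonglongrightarrow> W x + lam"
      by (rule Lim_transform[rotated])
    moreover have "(\<lambda>n. G (w (k n)) x) \<longlonglongrightarrow> G W x"
      using w_Lip W_Lip w_lim x by (rule G_tendsto_uniform_limit)
    ultimately have "W x + lam = G W x" by (rule LIMSEQ_unique)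
    then show ?thesis by simp
  qed
  then show ?thesis using that W_Lip by blast
qed

theorem additive_eigenvector:
  obtains lam v where "v \<in> Lip_wrt D X" "\<And>x. x \<in> X \<Longrightarrow> G v x = lam + v x"
proof -
  obtain x0 where x0: "x0 \<in> X" using X_nonempty by blast
  obtain M where M: "\<And>v x y. v \<in> Lip_wrt D X \<Longrightarrow> x \<in> X \<Longrightarrow> y \<in> X \<Longrightarrow> \<bar>v x - v y\<bar> \<le> M"
    using Lip_oscillation_bound by blast
  have "G (\<lambda>_. 0) \<in> Lip_wrt D X" using D_nonneg by (intro G_Lip Lip_wrt_const)
  then have G0: "\<bar>G (\<lambda>_. 0) x\<bar> \<le> \<bar>G (\<lambda>_. 0) x0\<bar> + M" if "x \<in> X" for x
    using M[of _ x x0] that x0 by fastforce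
  have "\<exists>w c. w \<in> Lip_wrt D X \<and> w x0 = 0 \<and> \<bar>c\<bar> \<le> \<bar>G (\<lambda>_. 0) x0\<bar> + M \<and>
      (\<forall>x\<in>X. \<bar>G w x - (w x + c)\<bar> \<le> inverse (Suc n))" for n
  proof -
    have "0 < inverse (real (Suc n))" by simp
    then show ?thesis using approximate_eigenvector[OF G0 x0] by metis
  qed
  then obtain w c where "\<And>n. w n \<in> Lip_wrt D X" "\<And>n. w n x0 = 0" "\<And>n. \<bar>c n\<bar> \<le> \<bar>G (\<lambda>_. 0) x0\<bar> + M"
    "\<And>n x. x \<in> X \<Longrightarrow> \<bar>G (w n) x - (w n x + c n)\<bar> \<le> inverse (Suc n)"
    by metis
  then show ?thesis
    using that by (rule eigenvector_of_approximate[OF x0 _ _ _ LIMSEQ_inverse_real_of_nat])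
qed

end

section \<open>The Funk hemi-metric of a proper cone\<close>

locale proper_cone =
  fixes C :: "'a::euclidean_space set" and e :: 'a
  assumes C_closed: "closed C" and C_convex: "convex C" and C_cone: "cone C"
    and C_pointed: "pointed_cone C" and C_solid: "interior C \<noteq> {}"
    and e_interior: "e \<in> interior (dual_cone C)"
begin

lemma C_add: "x \<in> C \<Longrightarrow> y \<in> C \<Longrightarrow> x + y \<in> C"
  using convex_cone[THEN iffD1, OF conjI[OF C_convex C_cone]] by blast

lemma C_scale: "x \<in> C \<Longrightarrow> 0 \<le> c \<Longrightarrow> c *\<^sub>R x \<in> C"
  using convex_cone[THEN iffD1, OF conjI[OF C_convex C_cone]] by blast

lemma e_nonneg: "x \<in> C \<Longrightarrow> 0 \<le> x \<bullet> e"
  using e_interior interior_subset unfolding dual_cone_def by blast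

lemma e_coercive: obtains \<rho> where "0 < \<rho>" "\<And>x. x \<in> C \<Longrightarrow> \<rho> * norm x \<le> x \<bullet> e"
proof -
  obtain r where r: "0 < r" "ball e r \<subseteq> dual_cone C" using e_interior by (auto simp: mem_interior)
  have "r / 2 * norm x \<le> x \<bullet> e" if x: "x \<in> C" for x
  proof (cases "x = 0")
    case False
    \<comment> \<open>Test \<open>x\<close> against the point of the ball around \<open>e\<close> pushed away from \<open>x\<close>.\<close>
    define p where "p = e - (r / 2 / norm x) *\<^sub>R x"
    have "dist e p = r / 2" using False r by (simp add: p_def dist_norm)
    then have "p \<in> dual_cone C" using r by auto
    then have "0 \<le> x \<bullet> p" using x by (auto simp: dual_cone_def)
    also have "x \<bullet> p = x \<bullet> e - r / 2 * norm x"
      using False by (simp add: p_def inner_diff_right power2_norm_eq_inner[symmetric] power2_eq_square)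
    finally show ?thesis by simp
  qed simp
  then show ?thesis using r by (intro that[of "r / 2"]) auto
qed

lemma e_pos:
  assumes "x \<in> C" "x \<noteq> 0" shows "0 < x \<bullet> e"
proof -
  obtain \<rho> where "0 < \<rho>" "\<rho> * norm x \<le> x \<bullet> e" using e_coercive assms(1) by metis
  moreover have "0 < \<rho> * norm x" using \<open>0 < \<rho>\<close> assms(2) by simp
  ultimately show ?thesis by linarith
qed

lemma zero_notin_interior: "0 \<notin> interior C"
proof
  assume "0 \<in> interior C"
  then obtain r where r: "0 < r" "ball 0 r \<subseteq> C" by (auto simp: mem_interior)
  obtain b :: 'a where b: "b \<in> Basis" using nonempty_Basis by blast
  define u where "u = (r / 2) *\<^sub>R b"
  have "norm u = r / 2" using b r by (simp add: u_def)
  then have "u \<in> C" "- u \<in> C" using r by auto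
  then have "u = 0" using C_pointed by (auto simp: pointed_cone_def)
  with \<open>norm u = r / 2\<close> r show False by simp
qed

lemma interior_nonzero: "y \<in> interior C \<Longrightarrow> y \<in> C \<and> y \<noteq> 0"
  using interior_subset zero_notin_interior by blast

lemma interior_scale:
  assumes "y \<in> interior C" "0 < t" shows "t *\<^sub>R y \<in> interior C"
proof -
  have "\<forall>x\<in>interior C. \<forall>c\<ge>0. c = 0 \<or> x = 0 \<or> c *\<^sub>R x \<in> interior C"
    using cone_rel_interior[OF C_cone]
    unfolding rel_interior_nonempty_interior[OF C_solid] cone_def by auto
  then have "t = 0 \<or> y = 0 \<or> t *\<^sub>R y \<in> interior C" using assms less_imp_le by blast
  then show ?thesis using assms interior_nonzero[OF assms(1)] by auto
qed

lemma ball_translate_mem: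
  assumes "ball x r \<subseteq> C" "0 < s" "norm d < s * r"
  shows "s *\<^sub>R x + d \<in> C"
proof -
  have "x + (1 / s) *\<^sub>R d \<in> C"
    using assms by (intro subsetD[OF assms(1)]) (simp add: dist_norm field_simps)
  then have "s *\<^sub>R (x + (1 / s) *\<^sub>R d) \<in> C" using assms(2) by (intro C_scale) auto
  then show ?thesis using assms(2) by (simp add: scaleR_add_right)
qed

definition ratios :: "'a \<Rightarrow> 'a \<Rightarrow> real set" where
  "ratios x y = {l. 0 < l \<and> cone_le C x (l *\<^sub>R y)}"

lemma Funk_eq_ln_Inf: "Funk C x y = ln (Inf (ratios x y))"
  by (simp add: Funk_def ratios_def)

lemma ratios_bdd_below: "bdd_below (ratios x y)"
  by (rule bdd_belowI[of _ 0]) (auto simp: ratios_def)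

lemma ratios_nonempty:
  assumes "y \<in> interior C" shows "ratios x y \<noteq> {}"
proof -
  obtain r where r: "0 < r" "ball y r \<subseteq> C" using assms by (auto simp: mem_interior)
  define l where "l = norm x / r + 1"
  have l: "0 < l" using r by (simp add: l_def add_nonneg_pos)
  have "norm (- x) < l * r" using r by (simp add: l_def field_simps)
  then have "l *\<^sub>R y + - x \<in> C" using r l by (intro ball_translate_mem) auto
  then show ?thesis using l by (auto simp: ratios_def cone_le_def)
qed

lemma Inf_ratios_ge:
  assumes "y \<in> interior C"
  shows "(x \<bullet> e) / (y \<bullet> e) \<le> Inf (ratios x y)"
proof (rule cInf_greatest[OF ratios_nonempty[OF assms]])
  fix l assume "l \<in> ratios x y"
  then have "0 \<le> (l *\<^sub>R y - x) \<bullet> e" by (intro e_nonneg) (simp add: ratios_def cone_le_def)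
  moreover have "0 < y \<bullet> e" using interior_nonzero[OF assms] e_pos by blast
  ultimately show "(x \<bullet> e) / (y \<bullet> e) \<le> l" by (simp add: inner_diff_left divide_le_eq)
qed

lemma Inf_ratios_pos:
  assumes "x \<in> C" "x \<noteq> 0" "y \<in> interior C"
  shows "0 < Inf (ratios x y)"
  using Inf_ratios_ge[OF assms(3), of x] e_pos[OF assms(1,2)] e_pos interior_nonzero[OF assms(3)]
  by (smt (verit) divide_pos_pos)

lemma ln_ratio_le_Funk:
  assumes "x \<in> C" "x \<noteq> 0" "y \<in> interior C"
  shows "ln ((x \<bullet> e) / (y \<bullet> e)) \<le> Funk C x y"
proof -
  have "0 < (x \<bullet> e) / (y \<bullet> e)" using e_pos assms interior_nonzero[OF assms(3)] by simp
  then show ?thesis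
    unfolding Funk_eq_ln_Inf using Inf_ratios_ge[OF assms(3), of x] by (simp add: ln_mono)
qed

lemma Funk_le_ln:
  assumes "x \<in> C" "x \<noteq> 0" "y \<in> interior C" "0 < l" "cone_le C x (l *\<^sub>R y)"
  shows "Funk C x y \<le> ln l"
proof -
  have "Inf (ratios x y) \<le> l" using assms by (intro cInf_lower ratios_bdd_below) (simp add: ratios_def)
  then show ?thesis unfolding Funk_eq_ln_Inf using Inf_ratios_pos[OF assms(1-3)] by simp
qed

lemma Funk_scale_le:
  assumes x: "x \<in> C" "x \<noteq> 0" and y: "y \<in> interior C" and s: "0 < s" and t: "0 < t"
  shows "Funk C (s *\<^sub>R x) (t *\<^sub>R y) \<le> Funk C x y + ln s - ln t"
proof -
  have scaled: "l * s / t \<in> ratios (s *\<^sub>R x) (t *\<^sub>R y)" if "l \<in> ratios x y" for l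
  proof -
    have "(l * s / t) *\<^sub>R t *\<^sub>R y - s *\<^sub>R x = s *\<^sub>R (l *\<^sub>R y - x)"
      using t by (simp add: algebra_simps)
    then show ?thesis using that s t C_scale by (auto simp: ratios_def cone_le_def)
  qed
  have "Inf (ratios (s *\<^sub>R x) (t *\<^sub>R y)) * t / s \<le> Inf (ratios x y)"
  proof (rule cInf_greatest[OF ratios_nonempty[OF y]])
    fix l assume "l \<in> ratios x y"
    then have "Inf (ratios (s *\<^sub>R x) (t *\<^sub>R y)) \<le> l * s / t"
      by (intro cInf_lower scaled ratios_bdd_below)
    then show "Inf (ratios (s *\<^sub>R x) (t *\<^sub>R y)) * t / s \<le> l" using s t by (simp add: field_simps)
  qed
  moreover have "0 < Inf (ratios (s *\<^sub>R x) (t *\<^sub>R y))"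
    using x s t by (intro Inf_ratios_pos interior_scale[OF y]) (auto intro: C_scale)
  ultimately have "ln (Inf (ratios (s *\<^sub>R x) (t *\<^sub>R y))) \<le> ln (Inf (ratios x y) * s / t)"
    using s t by (intro ln_mono) (simp_all add: field_simps)
  then show ?thesis
    using Inf_ratios_pos[OF x y] s t by (simp add: Funk_eq_ln_Inf ln_div ln_mult)
qed

lemma Funk_triangle:
  assumes x: "x \<in> C" "x \<noteq> 0" and z: "z \<in> interior C" and y: "y \<in> interior C"
  shows "Funk C x y \<le> Funk C x z + Funk C z y"
proof -
  define I I1 I2 where "I = Inf (ratios x y)" and "I1 = Inf (ratios x z)" and "I2 = Inf (ratios z y)"
  have pos: "0 < I" "0 < I1" "0 < I2"
    using Inf_ratios_pos x y z interior_nonzero by (auto simp: I_def I1_def I2_def)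
  have "I \<le> l1 * l2" if l1: "l1 \<in> ratios x z" and l2: "l2 \<in> ratios z y" for l1 l2
  proof -
    have "l1 *\<^sub>R (l2 *\<^sub>R y - z) + (l1 *\<^sub>R z - x) \<in> C"
      using l1 l2 by (intro C_add C_scale) (auto simp: ratios_def cone_le_def)
    then have "l1 * l2 \<in> ratios x y"
      using l1 l2 by (simp add: ratios_def cone_le_def algebra_simps)
    then show ?thesis unfolding I_def by (intro cInf_lower ratios_bdd_below)
  qed
  then have "I / l2 \<le> I1" if "l2 \<in> ratios z y" for l2
    using that unfolding I1_def
    by (intro cInf_greatest[OF ratios_nonempty[OF z]]) (simp add: ratios_def divide_le_eq)
  then have "I / I1 \<le> I2"
    unfolding I2_def using pos
    by (intro cInf_greatest[OF ratios_nonempty[OF y]])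
      (simp add: ratios_def divide_le_eq field_simps flip: I2_def)
  then have "ln I \<le> ln (I1 * I2)" using pos by (simp add: field_simps)
  then show ?thesis using pos by (simp add: Funk_eq_ln_Inf I_def I1_def I2_def ln_mult)
qed

end

section \<open>The Shapley operator and its semidiscretisation\<close>

lemma INF_SUP_le_shift:
  fixes f g :: "'b \<Rightarrow> 'c \<Rightarrow> real"
  assumes "A \<noteq> {}" "B \<noteq> {}"
    and f_bounded: "\<And>a b. a \<in> A \<Longrightarrow> b \<in> B \<Longrightarrow> \<bar>f a b\<bar> \<le> M"
    and g_bounded: "\<And>a b. a \<in> A \<Longrightarrow> b \<in> B \<Longrightarrow> \<bar>g a b\<bar> \<le> M"
    and le: "\<And>a b. a \<in> A \<Longrightarrow> b \<in> B \<Longrightarrow> f a b \<le> g a b + d"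
  shows "(INF a\<in>A. SUP b\<in>B. f a b) \<le> (INF a\<in>A. SUP b\<in>B. g a b) + d"
proof -
  have f_bdd: "bdd_above (f a ` B)" and g_bdd: "bdd_above (g a ` B)" if "a \<in> A" for a
    using f_bounded[OF that] g_bounded[OF that] by (auto intro!: bdd_aboveI[of _ M] simp: abs_le_iff)
  have SUP_le: "(SUP b\<in>B. f a b) \<le> (SUP b\<in>B. g a b) + d" if a: "a \<in> A" for a
  proof (rule cSUP_least[OF \<open>B \<noteq> {}\<close>])
    fix b assume b: "b \<in> B"
    have "g a b \<le> (SUP b\<in>B. g a b)" by (rule cSUP_upper[OF b g_bdd[OF a]])
    then show "f a b \<le> (SUP b\<in>B. g a b) + d" using le[OF a b] by simp
  qed
  have SUP_ge: "- M \<le> (SUP b\<in>B. f a b)" if a: "a \<in> A" for a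
  proof -
    obtain b where b: "b \<in> B" using \<open>B \<noteq> {}\<close> by auto
    have "- M \<le> f a b" using f_bounded[OF a b] by (simp add: abs_le_iff)
    also have "\<dots> \<le> (SUP b\<in>B. f a b)" by (rule cSUP_upper[OF b f_bdd[OF a]])
    finally show ?thesis .
  qed
  have "(INF a\<in>A. SUP b\<in>B. f a b) - d \<le> (INF a\<in>A. SUP b\<in>B. g a b)"
  proof (rule cINF_greatest[OF \<open>A \<noteq> {}\<close>])
    fix a assume a: "a \<in> A"
    have "bdd_below ((\<lambda>a. SUP b\<in>B. f a b) ` A)"
      using SUP_ge by (intro bdd_belowI[of _ "- M"]) auto
    then have "(INF a\<in>A. SUP b\<in>B. f a b) \<le> (SUP b\<in>B. f a b)" by (rule cINF_lower[OF _ a])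
    then show "(INF a\<in>A. SUP b\<in>B. f a b) - d \<le> (SUP b\<in>B. g a b)" using SUP_le[OF a] by simp
  qed
  then show ?thesis by simp
qed

lemma distance_like_if_Funk_bounded:
  assumes v: "v \<in> Lip1 C Y" and x1: "x1 \<in> Y"
    and M: "\<And>x y. x \<in> Y \<Longrightarrow> y \<in> Y \<Longrightarrow> Funk C x y \<le> M"
  shows "distance_like C Y v"
proof -
  have "v x1 - 2 * M + Funk C x x1 \<le> v x" if "x \<in> Y" for x
  proof -
    have "v x1 - v x \<le> Funk C x1 x" using v x1 that by (auto simp: Lip1_def)
    then show ?thesis using M[OF x1 that] M[OF that x1] by linarith
  qed
  then show ?thesis unfolding distance_like_def using x1 by blast
qed

lemma Ih_le: "finite Xh \<Longrightarrow> y \<in> Xh \<Longrightarrow> Ih C Xh v x \<le> v y + Funk C x y"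
  unfolding Ih_def by (intro Min_le) auto

lemma Ih_attained:
  assumes "finite Xh" "Xh \<noteq> {}" shows "\<exists>y\<in>Xh. Ih C Xh v x = v y + Funk C x y"
proof -
  have "Ih C Xh v x \<in> (\<lambda>y. v y + Funk C x y) ` Xh" unfolding Ih_def using assms by (intro Min_in) auto
  then show ?thesis by auto
qed

lemma Ih_shift_mono:
  assumes "finite Xh" "Xh \<noteq> {}" "\<And>y. y \<in> Xh \<Longrightarrow> v y \<le> w y + d"
  shows "Ih C Xh v x \<le> Ih C Xh w x + d"
proof -
  obtain y where y: "y \<in> Xh" "Ih C Xh w x = w y + Funk C x y"
    using Ih_attained[OF assms(1,2)] by blast
  show ?thesis using Ih_le[OF assms(1) y(1), of C v x] assms(3)[OF y(1)] y(2) by linarith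
qed

locale shapley_setting = proper_cone C e
  for C :: "'a::euclidean_space set" and e :: 'a +
  fixes K :: "'a set" and A :: "'b set" and B :: "'c set" and T :: "'b \<Rightarrow> 'c \<Rightarrow> 'a \<Rightarrow> 'a"
  assumes A_nonempty: "A \<noteq> {}" and B_nonempty: "B \<noteq> {}"
    and T_interior: "\<And>a b x. a \<in> A \<Longrightarrow> b \<in> B \<Longrightarrow> x \<in> interior C \<Longrightarrow> T a b x \<in> interior C"
    and T_nonexpansive: "\<And>a b x y. a \<in> A \<Longrightarrow> b \<in> B \<Longrightarrow> x \<in> interior C \<Longrightarrow> y \<in> interior C \<Longrightarrow>
        Funk C (T a b x) (T a b y) \<le> Funk C x y"
    and T_compact: "\<And>S. compact S \<Longrightarrow> S \<subseteq> interior C \<Longrightarrow>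
        compact {T a b x | a b x. a \<in> A \<and> b \<in> B \<and> x \<in> S}"
    and K_closed: "closed K" and K_cone: "cone K" and K_subset: "K \<subseteq> C"
    and K_invariant: "\<And>a b. a \<in> A \<Longrightarrow> b \<in> B \<Longrightarrow> T a b ` K \<subseteq> K"
    and X_rel_interior: "K \<inter> Delta_set C e \<subseteq> rel_interior (Delta_set C e)"
    and X_nonempty: "K \<inter> Delta_set C e \<noteq> {}"
begin

abbreviation X :: "'a set" where "X \<equiv> K \<inter> Delta_set C e"

lemma Delta_set_eq: "Delta_set C e = C \<inter> {x. e \<bullet> x = 1}"
  by (auto simp: Delta_set_def inner_commute)

lemma X_compact: "compact X"
proof -
  obtain \<rho> where \<rho>: "0 < \<rho>" "\<And>x. x \<in> C \<Longrightarrow> \<rho> * norm x \<le> x \<bullet> e" using e_coercive by blast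
  have "X \<subseteq> cball 0 (1 / \<rho>)"
  proof
    fix x assume "x \<in> X"
    then have "\<rho> * norm x \<le> 1" using \<rho>(2)[of x] by (simp add: Delta_set_def)
    then show "x \<in> cball 0 (1 / \<rho>)" using \<rho>(1) by (simp add: field_simps)
  qed
  then have "bounded X" by (rule bounded_subset[OF bounded_cball])
  moreover have "closed X"
    unfolding Delta_set_eq by (intro closed_Int K_closed C_closed closed_hyperplane)
  ultimately show ?thesis by (simp add: compact_eq_bounded_closed)
qed

lemma X_subset_interior: "X \<subseteq> interior C"
proof -
  obtain z where z: "z \<in> interior C" using C_solid by blast
  have "0 < z \<bullet> e" using interior_nonzero[OF z] e_pos by blast
  then have "(1 / (z \<bullet> e)) *\<^sub>R z \<in> interior C \<inter> {x. e \<bullet> x = 1}"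
    using interior_scale[OF z] by (simp add: inner_commute)
  then have meet: "rel_interior C \<inter> rel_interior {x. e \<bullet> x = 1} \<noteq> {}"
    unfolding rel_interior_nonempty_interior[OF C_solid] rel_interior_affine[OF affine_hyperplane]
    by blast
  have "rel_interior (Delta_set C e) = interior C \<inter> {x. e \<bullet> x = 1}"
    unfolding Delta_set_eq convex_rel_interior_inter_two[OF C_convex convex_hyperplane meet]
      rel_interior_nonempty_interior[OF C_solid] rel_interior_affine[OF affine_hyperplane] ..
  then show ?thesis using X_rel_interior by auto
qed

lemma X_memD: "x \<in> X \<Longrightarrow> x \<in> interior C \<and> x \<in> C \<and> x \<noteq> 0 \<and> x \<bullet> e = 1"
  using X_subset_interior interior_nonzero by (auto simp: Delta_set_def)

lemma X_uniform_ball: obtains r where "0 < r" "\<And>x. x \<in> X \<Longrightarrow> ball x r \<subseteq> C"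
proof -
  obtain r where "0 < r" "(\<Union>x\<in>X. ball x r) \<subseteq> interior C"
    using compact_subset_open_imp_ball_epsilon_subset[OF X_compact open_interior X_subset_interior]
    by blast
  then show ?thesis using that interior_subset by blast
qed

lemma Funk_nonneg_on_X: "x \<in> X \<Longrightarrow> y \<in> X \<Longrightarrow> 0 \<le> Funk C x y"
  using ln_ratio_le_Funk[of x y] X_memD by auto

lemma Funk_bounded_on_X: "\<exists>M. \<forall>x\<in>X. \<forall>y\<in>X. Funk C x y \<le> M"
proof -
  obtain r where r: "0 < r" "\<And>x. x \<in> X \<Longrightarrow> ball x r \<subseteq> C" using X_uniform_ball by blast
  obtain R where R: "\<And>x. x \<in> X \<Longrightarrow> norm x \<le> R"
    using compact_imp_bounded[OF X_compact] by (auto simp: bounded_iff)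
  define l where "l = \<bar>R\<bar> / r + 1"
  have l: "0 < l" using r by (simp add: l_def add_nonneg_pos)
  have "Funk C x y \<le> ln l" if x: "x \<in> X" and y: "y \<in> X" for x y
  proof (rule Funk_le_ln)
    have "l * r = \<bar>R\<bar> + r" using r by (simp add: l_def field_simps)
    then have "norm (- x) < l * r" using R[OF x] r by simp
    then have "l *\<^sub>R y + - x \<in> C" using r(2)[OF y] l by (intro ball_translate_mem)
    then show "cone_le C x (l *\<^sub>R y)" by (simp add: cone_le_def)
  qed (use X_memD x y l in auto)
  then show ?thesis by blast
qed

lemma Funk_small_near_diagonal:
  assumes x: "x \<in> X" and \<epsilon>: "0 < \<epsilon>"
  shows "\<exists>\<delta>>0. \<forall>y\<in>X. norm (x - y) < \<delta> \<longrightarrow> Funk C x y < \<epsilon> \<and> Funk C y x < \<epsilon>"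
proof -
  obtain r where r: "0 < r" "\<And>x. x \<in> X \<Longrightarrow> ball x r \<subseteq> C" using X_uniform_ball by blast
  define l where "l = exp (\<epsilon> / 2)"
  have l: "1 < l" "ln l < \<epsilon>" using \<epsilon> by (auto simp: l_def)
  define \<delta> where "\<delta> = r * (l - 1) / l"
  have "Funk C x y < \<epsilon> \<and> Funk C y x < \<epsilon>" if y: "y \<in> X" and xy: "norm (x - y) < \<delta>" for y
  proof -
    \<comment> \<open>Both \<open>l y - x\<close> and \<open>l x - y\<close> lie in the ball of radius \<open>(l - 1) r\<close> around \<open>(l - 1) x\<close>.\<close>
    have "l * \<delta> = (l - 1) * r" using l by (simp add: \<delta>_def)
    moreover have "norm (x - y) \<le> l * norm (x - y)" using l by (simp add: mult_le_cancel_right1)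
    moreover have "norm (l *\<^sub>R (y - x)) = l * norm (x - y)"
      using l by (simp add: norm_minus_commute)
    moreover have "l * norm (x - y) < l * \<delta>" using xy l by simp
    ultimately have "norm (l *\<^sub>R (y - x)) < (l - 1) * r" "norm (x - y) < (l - 1) * r"
      using xy by linarith+
    then have "(l - 1) *\<^sub>R x + l *\<^sub>R (y - x) \<in> C" "(l - 1) *\<^sub>R x + (x - y) \<in> C"
      using l r(2)[OF x] by (auto intro: ball_translate_mem)
    then have "cone_le C x (l *\<^sub>R y)" "cone_le C y (l *\<^sub>R x)"
      by (simp_all add: cone_le_def algebra_simps)
    then have "Funk C x y \<le> ln l" "Funk C y x \<le> ln l"
      using X_memD[OF x] X_memD[OF y] l by (auto intro!: Funk_le_ln)
    then show ?thesis using l by linarith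
  qed
  moreover have "0 < \<delta>" using r l by (simp add: \<delta>_def)
  ultimately show ?thesis by blast
qed

definition payoff :: "('a \<Rightarrow> real) \<Rightarrow> 'a \<Rightarrow> 'b \<Rightarrow> 'c \<Rightarrow> real" where
  "payoff v x a b = ln (T a b x \<bullet> e) + v ((1 / (T a b x \<bullet> e)) *\<^sub>R T a b x)"

lemma Fop_eq_payoff: "Fop e A B T v x = (INF a\<in>A. SUP b\<in>B. payoff v x a b)"
  by (simp add: Fop_def payoff_def)

lemma normalized_image_in_X:
  assumes "a \<in> A" "b \<in> B" "x \<in> X"
  shows "0 < T a b x \<bullet> e" and "(1 / (T a b x \<bullet> e)) *\<^sub>R T a b x \<in> X"
proof -
  have y: "T a b x \<in> interior C" "T a b x \<in> K"
    using assms T_interior X_memD K_invariant[OF assms(1,2)] by auto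
  show pos: "0 < T a b x \<bullet> e" using interior_nonzero[OF y(1)] e_pos by blast
  have "(1 / (T a b x \<bullet> e)) *\<^sub>R T a b x \<in> K" using y(2) K_cone pos by (simp add: cone_def)
  then show "(1 / (T a b x \<bullet> e)) *\<^sub>R T a b x \<in> X" using K_subset pos by (auto simp: Delta_set_def)
qed

lemma ln_scale_bounded: "\<exists>L. \<forall>a\<in>A. \<forall>b\<in>B. \<forall>x\<in>X. \<bar>ln (T a b x \<bullet> e)\<bar> \<le> L"
proof -
  define Y where "Y = {T a b x | a b x. a \<in> A \<and> b \<in> B \<and> x \<in> X}"
  have "compact Y" unfolding Y_def by (rule T_compact[OF X_compact X_subset_interior])
  moreover have "\<forall>y\<in>Y. 0 < y \<bullet> e" unfolding Y_def using normalized_image_in_X(1) by blast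
  then have "continuous_on Y (\<lambda>y. ln (y \<bullet> e))" by (intro continuous_intros) auto
  ultimately have "bounded ((\<lambda>y. ln (y \<bullet> e)) ` Y)"
    by (intro compact_imp_bounded compact_continuous_image)
  then obtain L where "\<forall>y\<in>Y. \<bar>ln (y \<bullet> e)\<bar> \<le> L" by (auto simp: bounded_iff)
  then show ?thesis unfolding Y_def by blast
qed

lemma payoff_bounded:
  obtains L where "\<And>v Bv x a b. (\<And>y. y \<in> X \<Longrightarrow> \<bar>v y\<bar> \<le> Bv) \<Longrightarrow> x \<in> X \<Longrightarrow> a \<in> A \<Longrightarrow> b \<in> B \<Longrightarrow>
    \<bar>payoff v x a b\<bar> \<le> L + Bv"
proof -
  obtain L where L: "\<forall>a\<in>A. \<forall>b\<in>B. \<forall>x\<in>X. \<bar>ln (T a b x \<bullet> e)\<bar> \<le> L"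
    using ln_scale_bounded by blast
  have "\<bar>payoff v x a b\<bar> \<le> L + Bv"
    if "\<And>y. y \<in> X \<Longrightarrow> \<bar>v y\<bar> \<le> Bv" "x \<in> X" "a \<in> A" "b \<in> B" for v Bv x a b
    using L that normalized_image_in_X(2)[OF that(3,4,2)] unfolding payoff_def
    by (smt (verit))
  then show ?thesis using that by blast
qed

lemma payoff_Lip:
  assumes v: "v \<in> Lip_wrt (Funk C) X" and x: "x \<in> X" "x' \<in> X" and ab: "a \<in> A" "b \<in> B"
  shows "payoff v x a b \<le> payoff v x' a b + Funk C x x'"
proof -
  define p q where "p = T a b x" and "q = T a b x'"
  have pq: "p \<in> interior C" "q \<in> interior C"
    unfolding p_def q_def using ab x X_memD T_interior by auto
  have pos: "0 < p \<bullet> e" "0 < q \<bullet> e"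
    unfolding p_def q_def using normalized_image_in_X(1) ab x by auto
  have "v ((1 / (p \<bullet> e)) *\<^sub>R p) - v ((1 / (q \<bullet> e)) *\<^sub>R q)
      \<le> Funk C ((1 / (p \<bullet> e)) *\<^sub>R p) ((1 / (q \<bullet> e)) *\<^sub>R q)"
    using v normalized_image_in_X(2) ab x unfolding p_def q_def Lip_wrt_def by blast
  also have "\<dots> \<le> Funk C p q + ln (1 / (p \<bullet> e)) - ln (1 / (q \<bullet> e))"
    using pq interior_nonzero pos by (intro Funk_scale_le) auto
  also have "\<dots> = Funk C p q - ln (p \<bullet> e) + ln (q \<bullet> e)"
    using pos by (simp add: ln_div)
  also have "Funk C p q \<le> Funk C x x'"
    unfolding p_def q_def using ab x X_memD by (intro T_nonexpansive) auto
  finally show ?thesis unfolding payoff_def p_def q_def by linarith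
qed

lemma Lip_bounded_on_X:
  assumes "v \<in> Lip_wrt (Funk C) X"
  obtains Bv where "\<And>y. y \<in> X \<Longrightarrow> \<bar>v y\<bar> \<le> Bv"
proof -
  obtain M where M: "\<forall>x\<in>X. \<forall>y\<in>X. Funk C x y \<le> M" using Funk_bounded_on_X by blast
  obtain x0 where x0: "x0 \<in> X" using X_nonempty by blast
  have "\<bar>v y\<bar> \<le> \<bar>v x0\<bar> + M" if y: "y \<in> X" for y
  proof -
    have "v y - v x0 \<le> Funk C y x0" "v x0 - v y \<le> Funk C x0 y"
      using assms x0 y by (auto simp: Lip_wrt_def)
    moreover have "Funk C y x0 \<le> M" "Funk C x0 y \<le> M" using M x0 y by auto
    ultimately show ?thesis by linarith
  qed
  then show ?thesis using that by blast
qed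

lemma Fop_le_shift:
  assumes v: "\<And>y. y \<in> X \<Longrightarrow> \<bar>v y\<bar> \<le> Bv" and w: "\<And>y. y \<in> X \<Longrightarrow> \<bar>w y\<bar> \<le> Bw"
    and x: "x \<in> X" "x' \<in> X"
    and le: "\<And>a b. a \<in> A \<Longrightarrow> b \<in> B \<Longrightarrow> payoff v x a b \<le> payoff w x' a b + d"
  shows "Fop e A B T v x \<le> Fop e A B T w x' + d"
proof -
  obtain L where L: "\<And>v Bv x a b. (\<And>y. y \<in> X \<Longrightarrow> \<bar>v y\<bar> \<le> Bv) \<Longrightarrow> x \<in> X \<Longrightarrow> a \<in> A \<Longrightarrow> b \<in> B \<Longrightarrow>
      \<bar>payoff v x a b\<bar> \<le> L + Bv"
    using payoff_bounded by blast
  have "\<bar>payoff v x a b\<bar> \<le> L + \<bar>Bv\<bar> + \<bar>Bw\<bar>" "\<bar>payoff w x' a b\<bar> \<le> L + \<bar>Bv\<bar> + \<bar>Bw\<bar>"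
    if "a \<in> A" "b \<in> B" for a b
    using L[of v Bv x a b, OF v x(1) that] L[of w Bw x' a b, OF w x(2) that] by linarith+
  then show ?thesis
    unfolding Fop_eq_payoff by (intro INF_SUP_le_shift A_nonempty B_nonempty le)
qed

lemma Fop_shift_mono:
  assumes "v \<in> Lip_wrt (Funk C) X" "w \<in> Lip_wrt (Funk C) X" "\<forall>y\<in>X. v y \<le> w y + d" "x \<in> X"
  shows "Fop e A B T v x \<le> Fop e A B T w x + d"
proof -
  obtain Bv Bw where "\<And>y. y \<in> X \<Longrightarrow> \<bar>v y\<bar> \<le> Bv" "\<And>y. y \<in> X \<Longrightarrow> \<bar>w y\<bar> \<le> Bw"
    using Lip_bounded_on_X assms(1,2) by metis
  then show ?thesis
    using assms(3,4) normalized_image_in_X(2)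
    by (intro Fop_le_shift[where x = x and x' = x]) (auto simp: payoff_def)
qed

lemma Fop_Lip:
  assumes "v \<in> Lip_wrt (Funk C) X"
  shows "Fop e A B T v \<in> Lip_wrt (Funk C) X"
proof -
  obtain Bv where Bv: "\<And>y. y \<in> X \<Longrightarrow> \<bar>v y\<bar> \<le> Bv" using Lip_bounded_on_X assms by blast
  have "Fop e A B T v x \<le> Fop e A B T v y + Funk C x y" if "x \<in> X" "y \<in> X" for x y
    by (rule Fop_le_shift[OF Bv Bv that payoff_Lip[OF assms that]])
  then show ?thesis unfolding Lip_wrt_def by (auto simp: diff_le_eq add.commute)
qed

lemma Fop_topical: "topical_Lip_operator X (Funk C) (Fop e A B T)"
proof
  show "compact X" by (rule X_compact)
  show "X \<noteq> {}" by (rule X_nonempty)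
qed (auto intro: Funk_nonneg_on_X Funk_bounded_on_X Funk_small_near_diagonal Fop_shift_mono Fop_Lip)

lemma Ih_Lip:
  assumes "finite Xh" "Xh \<noteq> {}" "Xh \<subseteq> X"
  shows "Ih C Xh v \<in> Lip_wrt (Funk C) X"
  unfolding Lip_wrt_def
proof (intro CollectI ballI)
  fix x x' assume x: "x \<in> X" "x' \<in> X"
  obtain y where y: "y \<in> Xh" "Ih C Xh v x' = v y + Funk C x' y"
    using Ih_attained[OF assms(1,2)] by blast
  have "Ih C Xh v x \<le> v y + Funk C x y" by (rule Ih_le[OF assms(1) y(1)])
  also have "Funk C x y \<le> Funk C x x' + Funk C x' y"
    using X_memD x y(1) assms(3) by (intro Funk_triangle) auto
  finally show "Ih C Xh v x - Ih C Xh v x' \<le> Funk C x x'" using y(2) by simp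
qed

lemma Fop_Ih_topical:
  assumes "finite Xh" "Xh \<noteq> {}" "Xh \<subseteq> X"
  shows "topical_Lip_operator X (Funk C) (\<lambda>v. Fop e A B T (Ih C Xh v))"
proof
  show "compact X" by (rule X_compact)
  show "X \<noteq> {}" by (rule X_nonempty)
  fix v w :: "'a \<Rightarrow> real" and d x
  assume "\<forall>y\<in>X. v y \<le> w y + d" "x \<in> X"
  then show "Fop e A B T (Ih C Xh v) x \<le> Fop e A B T (Ih C Xh w) x + d"
    using assms Ih_shift_mono[OF assms(1,2)]
    by (intro Fop_shift_mono Ih_Lip) (auto simp: subset_iff)
next
  show "Fop e A B T (Ih C Xh v) \<in> Lip_wrt (Funk C) X" for v :: "'a \<Rightarrow> real"
    by (intro Fop_Lip Ih_Lip assms)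
qed (auto intro: Funk_nonneg_on_X Funk_bounded_on_X Funk_small_near_diagonal)

end

theorem corollary2:
  fixes C K :: "'a::euclidean_space set" and e :: 'a
    and A :: "'b::topological_space set" and B :: "'c::topological_space set"
    and T :: "'b \<Rightarrow> 'c \<Rightarrow> 'a \<Rightarrow> 'a"
    and h :: real and Xh :: "'a set"
  assumes C_closed: "closed C" and C_convex: "convex C" and C_cone: "cone C"
    and C_pointed: "pointed_cone C" and C_solid: "interior C \<noteq> {}"
    and e_int: "e \<in> interior (dual_cone C)"
    and A_compact: "compact A" and A_ne: "A \<noteq> {}"
    and B_compact: "compact B" and B_ne: "B \<noteq> {}"
    and T_self: "\<And>a b x. a \<in> A \<Longrightarrow> b \<in> B \<Longrightarrow> x \<in> interior C \<Longrightarrow> T a b x \<in> interior C"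
    and T_nonexp: "\<And>a b x y. a \<in> A \<Longrightarrow> b \<in> B \<Longrightarrow> x \<in> interior C \<Longrightarrow> y \<in> interior C \<Longrightarrow>
        Funk C (T a b x) (T a b y) \<le> Funk C x y"
    and T_cont_a: "\<And>b x. b \<in> B \<Longrightarrow> x \<in> interior C \<Longrightarrow> continuous_on A (\<lambda>a. T a b x)"
    and T_cont_b: "\<And>a x. a \<in> A \<Longrightarrow> x \<in> interior C \<Longrightarrow> continuous_on B (\<lambda>b. T a b x)"
    and T_compact: "\<And>S. compact S \<Longrightarrow> S \<subseteq> interior C \<Longrightarrow>
        compact {T a b x | a b x. a \<in> A \<and> b \<in> B \<and> x \<in> S}"
    and T_ext: "\<And>a b. a \<in> A \<Longrightarrow> b \<in> B \<Longrightarrow> continuous_on C (T a b)"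
    and K_closed: "closed K" and K_cone: "cone K" and K_sub: "K \<subseteq> C"
    and K_inv: "\<And>a b. a \<in> A \<Longrightarrow> b \<in> B \<Longrightarrow> T a b ` K \<subseteq> K"
    and X_relint: "K \<inter> Delta_set C e \<subseteq> rel_interior (Delta_set C e)"
    and X_ne: "K \<inter> Delta_set C e \<noteq> {}"
    and h_pos: "0 < h"
    and Xh_fin: "finite Xh" and Xh_sub: "Xh \<subseteq> K \<inter> Delta_set C e"
    and Xh_cover: "K \<inter> Delta_set C e \<subseteq> (\<Union>y\<in>Xh. {x. Hil C x y < h})"
  shows "(\<exists>lam v. v \<in> Lip1 C (K \<inter> Delta_set C e) \<and> distance_like C (K \<inter> Delta_set C e) v \<and>
            (\<forall>x\<in>K \<inter> Delta_set C e. Fop e A B T v x = lam + v x))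
       \<and> (\<exists>lam v. v \<in> Lip1 C (K \<inter> Delta_set C e) \<and> distance_like C (K \<inter> Delta_set C e) v \<and>
            (\<forall>x\<in>K \<inter> Delta_set C e. Fop e A B T (Ih C Xh v) x = lam + v x))
       \<and> (\<exists>lam v. v \<in> Lip1 C Xh \<and> distance_like C Xh v \<and>
            (\<forall>x\<in>Xh. Fop e A B T (Ih C Xh v) x = lam + v x))"
proof -
  have Xh_nonempty: "Xh \<noteq> {}" using X_ne Xh_cover by blast
  interpret shapley_setting C e K A B T
    by unfold_locales (fact assms)+
  obtain M where M: "\<forall>x\<in>X. \<forall>y\<in>X. Funk C x y \<le> M" using Funk_bounded_on_X by blast
  have Lip1_distance_like: "v \<in> Lip1 C Y \<and> distance_like C Y v"
    if v: "v \<in> Lip_wrt (Funk C) X" and Y: "Y \<subseteq> X" "Y \<noteq> {}" for v Y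
  proof -
    have "v \<in> Lip1 C Y" using Lip_wrt_subset[OF v Y(1)] by (simp add: Lip1_eq_Lip_wrt_Funk)
    moreover obtain x1 where "x1 \<in> Y" using Y(2) by blast
    moreover have "Funk C x y \<le> M" if "x \<in> Y" "y \<in> Y" for x y using M Y(1) that by blast
    ultimately show ?thesis using distance_like_if_Funk_bounded by blast
  qed
  obtain lam v where v: "v \<in> Lip_wrt (Funk C) X" "\<And>x. x \<in> X \<Longrightarrow> Fop e A B T v x = lam + v x"
    using topical_Lip_operator.additive_eigenvector[OF Fop_topical] by blast
  obtain lam' v' where v': "v' \<in> Lip_wrt (Funk C) X"
    "\<And>x. x \<in> X \<Longrightarrow> Fop e A B T (Ih C Xh v') x = lam' + v' x"
    using topical_Lip_operator.additive_eigenvector[OF Fop_Ih_topical[OF Xh_fin Xh_nonempty Xh_sub]]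
    by blast
  show ?thesis
    using Lip1_distance_like[OF v(1) order_refl X_ne] Lip1_distance_like[OF v'(1) order_refl X_ne]
      Lip1_distance_like[OF v'(1) Xh_sub Xh_nonempty] v(2) v'(2) Xh_sub
    by blast
qed

end
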